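(* Let $G$ be a connected graph of order $n \ge 2$. Then $\dim_{1,f}(G)=\frac{n}{2}$ if and only if $G \in H[\mathcal{K} \cup \overline{\mathcal{K}}]$ for some connected graph $H$.
   Context: All graphs are finite, simple, undirected and connected. $d(x,y)$ is the length of a shortest $x$–$y$ path in $G$. For a positive integer $k$, $d_k(x,y)=\min\{d(x,y),k+1\}$ and $R_k\{x,y\}=\{z\in V(G): d_k(x,z)\neq d_k(y,z)\}$. For a function $g$ on $V(G)$ and $U\subseteq V(G)$, $g(U)=\sum_{s\in U}g(s)$. A function $h:V(G)\to[0,1]$ is a $k$-truncated resolving function of $G$ if $h(R_k\{x,y\})\ge 1$ for all distinct $x,y\in V(G)$; $\dim_{k,f}(G)$ is the minimum of $h(V(G))$ over all such $h$ (here $k=1$). Let $\mathcal{K}=\{K_a: a\ge 2\}$ (complete graphs) and $\overline{\mathcal{K}}=\{\overline{K}_b: b\ge 2\}$ (edgeless graphs). For a connected graph $H$, $H[\mathcal{K}\cup\overline{\mathcal{K}}]$ is the family of graphs obtained from $H$ by replacing each vertex $u_i\in V(H)$ by a graph $H_i\in\mathcal{K}\cup\overline{\mathcal{K}}$, where each vertex of $H_i$ is adjacent to each vertex of $H_j$ ($i\ne j$) if and only if $u_iu_j\in E(H)$. *)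

theory Defs
  imports Complex_Main
begin

definition simple_graph :: "'a set \<Rightarrow> ('a \<Rightarrow> 'a \<Rightarrow> bool) \<Rightarrow> bool" where
  "simple_graph V E \<longleftrightarrow> finite V \<and> (\<forall>x y. E x y \<longrightarrow> x \<in> V \<and> y \<in> V)
     \<and> (\<forall>x y. E x y \<longrightarrow> E y x) \<and> (\<forall>x. \<not> E x x)"

definition walk_of_len :: "('a \<Rightarrow> 'a \<Rightarrow> bool) \<Rightarrow> 'a \<Rightarrow> 'a \<Rightarrow> nat \<Rightarrow> bool" where
  "walk_of_len E x y n \<longleftrightarrow> (\<exists>xs. length xs = Suc n \<and> hd xs = x \<and> last xs = y
       \<and> (\<forall>i<n. E (xs ! i) (xs ! Suc i)))"

definition connected_graph :: "'a set \<Rightarrow> ('a \<Rightarrow> 'a \<Rightarrow> bool) \<Rightarrow> bool" where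
  "connected_graph V E \<longleftrightarrow> simple_graph V E \<and> V \<noteq> {}
     \<and> (\<forall>x\<in>V. \<forall>y\<in>V. \<exists>n. walk_of_len E x y n)"

definition gdist :: "('a \<Rightarrow> 'a \<Rightarrow> bool) \<Rightarrow> 'a \<Rightarrow> 'a \<Rightarrow> nat" where
  "gdist E x y = (LEAST n. walk_of_len E x y n)"

definition tdist :: "nat \<Rightarrow> ('a \<Rightarrow> 'a \<Rightarrow> bool) \<Rightarrow> 'a \<Rightarrow> 'a \<Rightarrow> nat" where
  "tdist k E x y = min (gdist E x y) (k + 1)"

definition Rk :: "nat \<Rightarrow> 'a set \<Rightarrow> ('a \<Rightarrow> 'a \<Rightarrow> bool) \<Rightarrow> 'a \<Rightarrow> 'a \<Rightarrow> 'a set" where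
  "Rk k V E x y = {z \<in> V. tdist k E x z \<noteq> tdist k E y z}"

definition trunc_resolving_fun :: "nat \<Rightarrow> 'a set \<Rightarrow> ('a \<Rightarrow> 'a \<Rightarrow> bool) \<Rightarrow> ('a \<Rightarrow> real) \<Rightarrow> bool" where
  "trunc_resolving_fun k V E h \<longleftrightarrow> (\<forall>v\<in>V. 0 \<le> h v \<and> h v \<le> 1)
     \<and> (\<forall>x\<in>V. \<forall>y\<in>V. x \<noteq> y \<longrightarrow> sum h (Rk k V E x y) \<ge> 1)"

text \<open>dim_{k,f}(G): minimum (= infimum, the feasible region being a compact polytope) of h(V).\<close>
definition frac_trunc_dim :: "nat \<Rightarrow> 'a set \<Rightarrow> ('a \<Rightarrow> 'a \<Rightarrow> bool) \<Rightarrow> real" where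
  "frac_trunc_dim k V E = Inf {sum h V | h. trunc_resolving_fun k V E h}"

text \<open>G \<in> H[K \<union> co-K] for some connected graph H (vertices of H coded as naturals):
  there is a connected graph H = (W,F) and a map \<pi> from V onto W whose fibres (the H_i) have
  at least two vertices each and are complete or edgeless, and two vertices in different fibres
  are adjacent iff their fibres correspond to adjacent vertices of H.\<close>
definition in_blowup_family :: "'a set \<Rightarrow> ('a \<Rightarrow> 'a \<Rightarrow> bool) \<Rightarrow> bool" where
  "in_blowup_family V E \<longleftrightarrow> (\<exists>(W::nat set) F (\<pi>::'a \<Rightarrow> nat).
     connected_graph W F \<and> \<pi> ` V = W
     \<and> (\<forall>u\<in>W. card {x\<in>V. \<pi> x = u} \<ge> 2
          \<and> ((\<forall>x\<in>V. \<forall>y\<in>V. \<pi> x = u \<and> \<pi> y = u \<and> x \<noteq> y \<longrightarrow> E x y)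
             \<or> (\<forall>x\<in>V. \<forall>y\<in>V. \<pi> x = u \<and> \<pi> y = u \<longrightarrow> \<not> E x y)))
     \<and> (\<forall>x\<in>V. \<forall>y\<in>V. \<pi> x \<noteq> \<pi> y \<longrightarrow> (E x y \<longleftrightarrow> F (\<pi> x) (\<pi> y))))"

end

theory Submission
  imports Defs
begin

text \<open>
  For truncation at 1 only adjacency matters, so \<open>R\<^sub>1{x,y}\<close> consists of \<open>x\<close>, \<open>y\<close> and the
  vertices adjacent to exactly one of them; it is just \<open>{x,y}\<close> exactly when \<open>x\<close> and \<open>y\<close> are
  twins. Hence the constant weight 1/2 always resolves and the dimension is at most n/2.
  If every vertex has a twin, the twin classes partition \<open>V\<close> into classes of size at least 2
  on which any resolving \<open>h\<close> satisfies \<open>h x + h y \<ge> 1\<close> for distinct \<open>x, y\<close>; this forces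
  \<open>h(C) \<ge> |C|/2\<close> on every class, so the dimension is n/2. If some vertex \<open>v\<close> has no twin,
  every pair containing \<open>v\<close> is also resolved by a third vertex, so weight 0 on \<open>v\<close> and 1/2
  elsewhere resolves and the dimension is at most (n-1)/2. Finally, the graphs in which every
  vertex has a twin are exactly the blow-ups of connected graphs by complete and edgeless
  graphs: the twin classes are the \<open>H\<^sub>i\<close>, each complete or edgeless, and \<open>H\<close> is the quotient.
\<close>

lemma walk_of_len_0_iff: "walk_of_len E x y 0 \<longleftrightarrow> x = y"
  unfolding walk_of_len_def
  by (metis last_ConsL length_0_conv length_Suc_conv list.sel(1) not_less_zero)

lemma walk_of_len_Suc_iff:
  "walk_of_len E x y (Suc n) \<longleftrightarrow> (\<exists>w. E x w \<and> walk_of_len E w y n)"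
proof
  assume "walk_of_len E x y (Suc n)"
  then obtain xs where xs: "length xs = Suc (Suc n)" "hd xs = x" "last xs = y"
      "\<forall>i<Suc n. E (xs ! i) (xs ! Suc i)"
    unfolding walk_of_len_def by blast
  then obtain ys where "xs = x # ys" by (cases xs) auto
  with xs have ys: "length ys = Suc n" "last (x # ys) = y"
      "\<forall>i<Suc n. E ((x # ys) ! i) ((x # ys) ! Suc i)"
    by auto
  have "E x (hd ys)" using ys(1) spec[OF ys(3), of 0] by (cases ys) auto
  moreover have "walk_of_len E (hd ys) y n"
    unfolding walk_of_len_def by (rule exI[of _ ys]) (use ys in auto)
  ultimately show "\<exists>w. E x w \<and> walk_of_len E w y n" by blast
next
  assume "\<exists>w. E x w \<and> walk_of_len E w y n"
  then obtain w ws where "E x w" "length ws = Suc n" "hd ws = w" "last ws = y"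
      "\<forall>i<n. E (ws ! i) (ws ! Suc i)"
    unfolding walk_of_len_def by blast
  then show "walk_of_len E x y (Suc n)"
    unfolding walk_of_len_def
    by (intro exI[of _ "x # ws"]) (auto simp: less_Suc_eq_0_disj hd_conv_nth)
qed

lemma walk_of_len_iff_relpowp: "walk_of_len E x y n \<longleftrightarrow> (E ^^ n) x y"
proof (induction n arbitrary: x)
  case 0
  then show ?case by (simp add: walk_of_len_0_iff)
next
  case (Suc n)
  then show ?case by (metis walk_of_len_Suc_iff relpowp_Suc_D2 relpowp_Suc_I2)
qed

lemma ex_walk_of_len_iff_rtranclp: "(\<exists>n. walk_of_len E x y n) \<longleftrightarrow> E\<^sup>*\<^sup>* x y"
  by (simp add: walk_of_len_iff_relpowp rtranclp_power)

lemma simple_graphD: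
  assumes "simple_graph V E"
  shows "finite V" and "E x y \<Longrightarrow> x \<in> V" and "E x y \<Longrightarrow> y \<in> V"
    and "E x y \<Longrightarrow> E y x" and "\<not> E x x"
  using assms unfolding simple_graph_def by blast+

lemma connected_graph_simple: "connected_graph V E \<Longrightarrow> simple_graph V E"
  unfolding connected_graph_def by blast

lemma connected_graph_rtranclp:
  "connected_graph V E \<Longrightarrow> x \<in> V \<Longrightarrow> y \<in> V \<Longrightarrow> E\<^sup>*\<^sup>* x y"
  unfolding connected_graph_def ex_walk_of_len_iff_rtranclp[symmetric] by blast

text \<open>Connectivity is needed: for unreachable \<open>y\<close>, \<open>gdist E x y\<close> is the junk value 0.\<close>

lemma tdist_1_eq:
  assumes "connected_graph V E" "x \<in> V" "y \<in> V"
  shows "tdist 1 E x y = (if x = y then 0 else if E x y then 1 else 2)"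
proof -
  let ?d = "gdist E x y"
  have walk: "(E ^^ ?d) x y"
    unfolding gdist_def walk_of_len_iff_relpowp
    using connected_graph_rtranclp[OF assms] by (metis LeastI rtranclp_power)
  have shortest: "?d \<le> n" if "(E ^^ n) x y" for n
    unfolding gdist_def walk_of_len_iff_relpowp using that by (rule Least_le)
  consider "?d = 0" | "?d = 1" | "?d \<ge> 2" by linarith
  then show ?thesis
  proof cases
    case 1
    then show ?thesis using walk by (simp add: tdist_def)
  next
    case 2
    then show ?thesis using walk shortest[of 0] by (auto simp: tdist_def)
  next
    case 3
    then show ?thesis using shortest[of 0] shortest[of 1] by (auto simp: tdist_def)
  qed
qed

lemma Rk_1_eq:
  assumes "connected_graph V E" "x \<in> V" "y \<in> V" "x \<noteq> y"
  shows "Rk 1 V E x y = {x, y} \<union> {z \<in> V - {x, y}. E x z \<noteq> E y z}"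
proof -
  have "tdist 1 E x z \<noteq> tdist 1 E y z \<longleftrightarrow> z = x \<or> z = y \<or> E x z \<noteq> E y z" if "z \<in> V" for z
    using assms that simple_graphD(4)[OF connected_graph_simple[OF assms(1)]]
    unfolding tdist_1_eq[OF assms(1) assms(2) that] tdist_1_eq[OF assms(1) assms(3) that] by auto
  then show ?thesis using assms(2,3) unfolding Rk_def by blast
qed

definition twins :: "'a set \<Rightarrow> ('a \<Rightarrow> 'a \<Rightarrow> bool) \<Rightarrow> 'a \<Rightarrow> 'a \<Rightarrow> bool" where
  "twins V E x y \<longleftrightarrow> (\<forall>z\<in>V - {x, y}. E x z \<longleftrightarrow> E y z)"

lemma Rk_1_eq_doubleton_iff_twins:
  assumes "connected_graph V E" "x \<in> V" "y \<in> V" "x \<noteq> y"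
  shows "Rk 1 V E x y = {x, y} \<longleftrightarrow> twins V E x y"
  unfolding Rk_1_eq[OF assms] twins_def by auto

lemma twins_refl: "twins V E x x"
  unfolding twins_def by blast

lemma twins_sym: "twins V E x y \<Longrightarrow> twins V E y x"
  unfolding twins_def by blast

lemma twins_trans:
  assumes "simple_graph V E" "x \<in> V" "z \<in> V" "twins V E x y" "twins V E y z"
  shows "twins V E x z"
  unfolding twins_def
proof
  fix w assume w: "w \<in> V - {x, z}"
  show "E x w \<longleftrightarrow> E z w"
  proof (cases "w = y")
    case True
    with w assms(2-5) have "E x z \<longleftrightarrow> E y z" "E y x \<longleftrightarrow> E z x" if "x \<noteq> z"
      using that unfolding twins_def by auto
    with True simple_graphD(4)[OF assms(1)] show ?thesis by blast
  next
    case False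
    with w assms(4,5) show ?thesis unfolding twins_def by blast
  qed
qed

definition twin_class :: "'a set \<Rightarrow> ('a \<Rightarrow> 'a \<Rightarrow> bool) \<Rightarrow> 'a \<Rightarrow> 'a set" where
  "twin_class V E x = {y \<in> V. twins V E x y}"

lemma twin_class_eq_iff:
  assumes "simple_graph V E" "x \<in> V" "y \<in> V"
  shows "twin_class V E x = twin_class V E y \<longleftrightarrow> twins V E x y"
proof
  assume eq: "twin_class V E x = twin_class V E y"
  have "y \<in> twin_class V E y" using assms(3) twins_refl by (simp add: twin_class_def)
  then have "y \<in> twin_class V E x" by (simp only: eq)
  then show "twins V E x y" by (simp add: twin_class_def)
next
  assume xy: "twins V E x y"
  have "twins V E x z \<longleftrightarrow> twins V E y z" if "z \<in> V" for z
    using twins_trans[OF assms(1) assms(3) that twins_sym[OF xy]]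
      twins_trans[OF assms(1) assms(2) that xy] by blast
  then show "twin_class V E x = twin_class V E y" by (auto simp: twin_class_def)
qed

lemma twin_class_fibre:
  assumes "simple_graph V E" "x \<in> V"
  shows "{y \<in> V. twin_class V E y = twin_class V E x} = twin_class V E x"
proof -
  have "twin_class V E y = twin_class V E x \<longleftrightarrow> twins V E x y" if "y \<in> V" for y
    using twin_class_eq_iff[OF assms(1) that assms(2)] twins_sym by metis
  then have "{y \<in> V. twin_class V E y = twin_class V E x} = {y \<in> V. twins V E x y}" by auto
  also have "\<dots> = twin_class V E x" by (rule twin_class_def[symmetric])
  finally show ?thesis .
qed

lemma twins_in_twin_class:
  assumes "simple_graph V E" "x \<in> V" "a \<in> twin_class V E x" "b \<in> twin_class V E x"
  shows "twins V E a b"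
proof -
  have "a \<in> V" "b \<in> V" "twins V E a x" "twins V E x b"
    using assms(3,4) twins_sym unfolding twin_class_def by auto
  then show ?thesis using twins_trans[OF assms(1)] by blast
qed

lemma two_le_card_twin_class:
  assumes "finite V" "v \<in> V" "y \<in> V - {v}" "twins V E v y"
  shows "2 \<le> card (twin_class V E v)"
proof -
  have "{v, y} \<subseteq> twin_class V E v" using assms twins_refl unfolding twin_class_def by auto
  moreover have "finite (twin_class V E v)" using assms(1) unfolding twin_class_def by simp
  ultimately have "card {v, y} \<le> card (twin_class V E v)" by (intro card_mono)
  moreover have "card {v, y} = 2" using assms(3) by auto
  ultimately show ?thesis by simp
qed

lemma half_card_le_sum_if_pair_sums_ge_1:
  fixes h :: "'a \<Rightarrow> real"
  assumes "finite C" "card C \<ge> 2" "\<And>x y. x \<in> C \<Longrightarrow> y \<in> C \<Longrightarrow> x \<noteq> y \<Longrightarrow> h x + h y \<ge> 1"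
  shows "real (card C) / 2 \<le> sum h C"
proof (cases "\<forall>x\<in>C. h x \<ge> 1/2")
  case True
  then have "sum (\<lambda>_. 1/2) C \<le> sum h C" by (intro sum_mono) auto
  then show ?thesis by simp
next
  case False
  \<comment> \<open>then every other vertex carries at least \<open>1 - h a > 1/2\<close>\<close>
  then obtain a where a: "a \<in> C" "h a < 1/2" by auto
  have "sum h C = h a + sum h (C - {a})" using a assms(1) by (simp add: sum.remove)
  moreover have "sum (\<lambda>_. 1 - h a) (C - {a}) \<le> sum h (C - {a})"
  proof (rule sum_mono)
    fix x assume "x \<in> C - {a}"
    then show "1 - h a \<le> h x" using assms(3)[OF a(1), of x] by auto
  qed
  moreover have "sum (\<lambda>_. 1 - h a) (C - {a}) = (real (card C) - 1) * (1 - h a)"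
    using a assms(1,2) by (simp add: card_Diff_singleton of_nat_diff)
  moreover have "(real (card C) - 2) * (1 - h a) \<ge> (real (card C) - 2) * (1/2)"
    using a assms(2) by (intro mult_left_mono) auto
  ultimately show ?thesis by (simp add: algebra_simps)
qed

lemma frac_trunc_dim_le:
  assumes "trunc_resolving_fun k V E h"
  shows "frac_trunc_dim k V E \<le> sum h V"
  unfolding frac_trunc_dim_def
proof (rule cInf_lower)
  show "sum h V \<in> {sum h V |h. trunc_resolving_fun k V E h}" using assms by blast
  show "bdd_below {sum h V |h. trunc_resolving_fun k V E h}"
    unfolding bdd_below_def trunc_resolving_fun_def by (auto intro!: exI[of _ 0] sum_nonneg)
qed

lemma le_frac_trunc_dim:
  assumes "trunc_resolving_fun k V E h" "\<And>h. trunc_resolving_fun k V E h \<Longrightarrow> c \<le> sum h V"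
  shows "c \<le> frac_trunc_dim k V E"
  unfolding frac_trunc_dim_def using assms by (intro cInf_greatest) auto

lemma trunc_resolving_fun_half:
  assumes "connected_graph V E"
  shows "trunc_resolving_fun 1 V E (\<lambda>_. 1/2)"
  unfolding trunc_resolving_fun_def
proof (intro conjI ballI impI)
  fix x y assume xy: "x \<in> V" "y \<in> V" "x \<noteq> y"
  have "finite (Rk 1 V E x y)"
    using simple_graphD(1)[OF connected_graph_simple[OF assms]] by (simp add: Rk_def)
  then have "sum (\<lambda>_. 1/2::real) {x, y} \<le> sum (\<lambda>_. 1/2) (Rk 1 V E x y)"
    using Rk_1_eq[OF assms xy] by (intro sum_mono2) auto
  then show "1 \<le> sum (\<lambda>_. 1/2::real) (Rk 1 V E x y)" using xy by simp
qed auto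

lemma half_card_le_sum_if_twinned:
  fixes h :: "'a \<Rightarrow> real"
  assumes G: "connected_graph V E" and twinned: "\<forall>v\<in>V. \<exists>y\<in>V - {v}. twins V E v y"
    and h: "trunc_resolving_fun 1 V E h"
  shows "real (card V) / 2 \<le> sum h V"
proof -
  have S: "simple_graph V E" by (rule connected_graph_simple[OF G])
  have fin: "finite V" by (rule simple_graphD(1)[OF S])
  have class_bound: "0 \<le> (\<Sum>y\<in>twin_class V E x. h y - 1/2)" if x: "x \<in> V" for x
  proof -
    let ?C = "twin_class V E x"
    have fin_C: "finite ?C" using fin unfolding twin_class_def by simp
    have "2 \<le> card ?C" using twinned two_le_card_twin_class[OF fin x] x by blast
    moreover have "1 \<le> h a + h b" if "a \<in> ?C" "b \<in> ?C" "a \<noteq> b" for a b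
    proof -
      have "a \<in> V" "b \<in> V" using that unfolding twin_class_def by auto
      then have "Rk 1 V E a b = {a, b}"
        using Rk_1_eq_doubleton_iff_twins[OF G _ _ \<open>a \<noteq> b\<close>] twins_in_twin_class[OF S x that(1,2)] by blast
      then show ?thesis using h \<open>a \<in> V\<close> \<open>b \<in> V\<close> \<open>a \<noteq> b\<close>
        unfolding trunc_resolving_fun_def by fastforce
    qed
    ultimately have "real (card ?C) / 2 \<le> sum h ?C" using fin_C by (intro half_card_le_sum_if_pair_sums_ge_1)
    then show ?thesis by (simp add: sum_subtractf)
  qed
  have "(\<Sum>y\<in>V. h y - 1/2) = (\<Sum>C\<in>twin_class V E ` V. \<Sum>y\<in>{y \<in> V. twin_class V E y = C}. h y - 1/2)"
    using fin by (intro sum.group[symmetric]) auto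
  also have "\<dots> = (\<Sum>C\<in>twin_class V E ` V. \<Sum>y\<in>C. h y - 1/2)"
    using twin_class_fibre[OF S] by (intro sum.cong) auto
  finally have "0 \<le> (\<Sum>y\<in>V. h y - 1/2)" using class_bound by (auto intro: sum_nonneg)
  then show ?thesis by (simp add: sum_subtractf)
qed

lemma trunc_resolving_fun_untwinned:
  assumes G: "connected_graph V E" and v: "v \<in> V" and untwinned: "\<forall>y\<in>V - {v}. \<not> twins V E v y"
  shows "trunc_resolving_fun 1 V E (\<lambda>z. if z = v then 0 else 1/2)"
    (is "trunc_resolving_fun 1 V E ?h")
  unfolding trunc_resolving_fun_def
proof (intro conjI ballI impI)
  fix x y assume xy: "x \<in> V" "y \<in> V" "x \<noteq> y"
  have fin_R: "finite (Rk 1 V E x y)"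
    using simple_graphD(1)[OF connected_graph_simple[OF G]] by (simp add: Rk_def)
  obtain a b where ab: "{a, b} \<subseteq> Rk 1 V E x y" "a \<noteq> v" "b \<noteq> v" "a \<noteq> b"
  proof (cases "v \<in> {x, y}")
    case True
    then obtain w where w: "w \<in> V - {v}" "{x, y} = {v, w}" using xy by auto
    then obtain z where z: "z \<in> V - {v, w}" "E v z \<noteq> E w z"
      using untwinned unfolding twins_def by blast
    then have "z \<in> Rk 1 V E x y" using Rk_1_eq[OF G xy] w by (auto simp: doubleton_eq_iff)
    then show ?thesis using that[of w z] Rk_1_eq[OF G xy] w z by auto
  next
    case False
    then show ?thesis using that[of x y] Rk_1_eq[OF G xy] xy by auto
  qed
  then have "sum ?h {a, b} \<le> sum ?h (Rk 1 V E x y)" using fin_R by (intro sum_mono2) auto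
  then show "1 \<le> sum ?h (Rk 1 V E x y)" using ab by simp
qed auto

lemma frac_trunc_dim_1_eq_half_card_iff:
  assumes G: "connected_graph V E"
  shows "frac_trunc_dim 1 V E = real (card V) / 2 \<longleftrightarrow> (\<forall>v\<in>V. \<exists>y\<in>V - {v}. twins V E v y)"
proof
  show "frac_trunc_dim 1 V E = real (card V) / 2" if "\<forall>v\<in>V. \<exists>y\<in>V - {v}. twins V E v y"
    using frac_trunc_dim_le[OF trunc_resolving_fun_half[OF G]]
      le_frac_trunc_dim[OF trunc_resolving_fun_half[OF G] half_card_le_sum_if_twinned[OF G that]]
    by simp
next
  assume dim: "frac_trunc_dim 1 V E = real (card V) / 2"
  show "\<forall>v\<in>V. \<exists>y\<in>V - {v}. twins V E v y"
  proof (rule ccontr)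
    assume "\<not> ?thesis"
    then obtain v where v: "v \<in> V" "\<forall>y\<in>V - {v}. \<not> twins V E v y" by blast
    have fin: "finite V" by (rule simple_graphD(1)[OF connected_graph_simple[OF G]])
    then have "card V \<ge> 1" using card_mono[OF fin, of "{v}"] v(1) by simp
    have "frac_trunc_dim 1 V E \<le> (\<Sum>z\<in>V. if z = v then 0 else 1/2)"
      by (rule frac_trunc_dim_le[OF trunc_resolving_fun_untwinned[OF G v]])
    also have "\<dots> = (real (card V) - 1) / 2"
      using v fin \<open>card V \<ge> 1\<close> by (simp add: sum.If_cases Diff_eq[symmetric] card_Diff_singleton of_nat_diff)
    finally show False using dim by simp
  qed
qed

lemma twin_class_complete_or_edgeless:
  assumes S: "simple_graph V E" and "v \<in> V"
  defines "C \<equiv> twin_class V E v"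
  shows "(\<forall>x\<in>C. \<forall>y\<in>C. x \<noteq> y \<longrightarrow> E x y) \<or> (\<forall>x\<in>C. \<forall>y\<in>C. \<not> E x y)"
proof -
  have rotate: "E p r" if "p \<in> C" "q \<in> C" "r \<in> C" "p \<noteq> r" "E p q" for p q r
  proof (cases "q = r")
    case False
    have "p \<noteq> q" using \<open>E p q\<close> simple_graphD(5)[OF S] by blast
    with that False have "E q p \<longleftrightarrow> E r p"
      using twins_in_twin_class[OF S \<open>v \<in> V\<close>, of q r] unfolding C_def twin_class_def twins_def
      by auto
    then show ?thesis using \<open>E p q\<close> simple_graphD(4)[OF S] by blast
  qed (use that in simp)
  show ?thesis
  proof (rule disjCI)
    assume "\<not> (\<forall>x\<in>C. \<forall>y\<in>C. \<not> E x y)"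
    then obtain a b where ab: "a \<in> C" "b \<in> C" "E a b" by blast
    show "\<forall>x\<in>C. \<forall>y\<in>C. x \<noteq> y \<longrightarrow> E x y"
    proof (intro ballI impI)
      fix x y assume xy: "x \<in> C" "y \<in> C" "x \<noteq> y"
      have "E x a" if "x \<noteq> a" using rotate[OF ab(1,2) xy(1) that[symmetric] ab(3)]
          simple_graphD(4)[OF S] by blast
      then show "E x y" using rotate[OF xy(1) _ xy(2,3)] rotate[OF ab(1,2) xy(2)] ab xy by blast
    qed
  qed
qed

lemma adj_twins_cong:
  assumes S: "simple_graph V E" and "twins V E x x'" "twins V E y y'"
    and "x \<in> V" "x' \<in> V" "y \<in> V" "y' \<in> V" "{x, x'} \<inter> {y, y'} = {}"
  shows "E x y \<longleftrightarrow> E x' y'"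
proof -
  have "E x y \<longleftrightarrow> E x' y" using assms(2,6,8) unfolding twins_def by blast
  also have "\<dots> \<longleftrightarrow> E y x'" using simple_graphD(4)[OF S] by blast
  also have "\<dots> \<longleftrightarrow> E y' x'" using assms(3,5,8) unfolding twins_def by blast
  also have "\<dots> \<longleftrightarrow> E x' y'" using simple_graphD(4)[OF S] by blast
  finally show ?thesis .
qed

lemma connected_graph_image:
  assumes G: "connected_graph V E" and S: "simple_graph (f ` V) F"
    and edges: "\<And>x y. E x y \<Longrightarrow> f x = f y \<or> F (f x) (f y)"
  shows "connected_graph (f ` V) F"
  unfolding connected_graph_def
proof (intro conjI ballI)
  show "f ` V \<noteq> {}" using G unfolding connected_graph_def by blast
  fix a b assume "a \<in> f ` V" "b \<in> f ` V"
  then obtain x y where "x \<in> V" "y \<in> V" "a = f x" "b = f y" by blast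
  have "F\<^sup>*\<^sup>* (f x) (f y)"
    using connected_graph_rtranclp[OF G \<open>x \<in> V\<close> \<open>y \<in> V\<close>]
  proof (induction rule: rtranclp_induct)
    case (step y z)
    then show ?case using edges[of y z] by (metis rtranclp.rtrancl_into_rtrancl)
  qed simp
  then show "\<exists>n. walk_of_len F a b n"
    using \<open>a = f x\<close> \<open>b = f y\<close> ex_walk_of_len_iff_rtranclp by metis
qed (rule S)

lemma twinned_if_in_blowup_family:
  assumes "in_blowup_family V E" "v \<in> V"
  shows "\<exists>y\<in>V - {v}. twins V E v y"
proof -
  obtain W F and \<pi> :: "'a \<Rightarrow> nat" where
    W: "\<pi> ` V = W"
    and fibres: "\<forall>u\<in>W. card {x\<in>V. \<pi> x = u} \<ge> 2
          \<and> ((\<forall>x\<in>V. \<forall>y\<in>V. \<pi> x = u \<and> \<pi> y = u \<and> x \<noteq> y \<longrightarrow> E x y)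
             \<or> (\<forall>x\<in>V. \<forall>y\<in>V. \<pi> x = u \<and> \<pi> y = u \<longrightarrow> \<not> E x y))"
    and cross: "\<forall>x\<in>V. \<forall>y\<in>V. \<pi> x \<noteq> \<pi> y \<longrightarrow> (E x y \<longleftrightarrow> F (\<pi> x) (\<pi> y))"
    using assms(1) unfolding in_blowup_family_def by blast
  let ?C = "{x\<in>V. \<pi> x = \<pi> v}"
  have "\<pi> v \<in> W" using W assms(2) by blast
  with fibres have card_C: "card ?C \<ge> 2"
    and uniform: "(\<forall>x\<in>V. \<forall>y\<in>V. \<pi> x = \<pi> v \<and> \<pi> y = \<pi> v \<and> x \<noteq> y \<longrightarrow> E x y)
             \<or> (\<forall>x\<in>V. \<forall>y\<in>V. \<pi> x = \<pi> v \<and> \<pi> y = \<pi> v \<longrightarrow> \<not> E x y)"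
    by blast+
  have "\<not> ?C \<subseteq> {v}" using card_C card_mono[of "{v}" ?C] by auto
  then obtain y where y: "y \<in> V - {v}" "\<pi> y = \<pi> v" by blast
  have "E v z \<longleftrightarrow> E y z" if z: "z \<in> V - {v, y}" for z
  proof (cases "\<pi> z = \<pi> v")
    case True
    with uniform y z assms(2) show ?thesis by blast
  next
    case False
    then show ?thesis using cross[rule_format, of v z] cross[rule_format, of y z] y z assms(2) by simp
  qed
  then show ?thesis using y unfolding twins_def by blast
qed

lemma in_blowup_familyI:
  fixes \<pi> :: "'a \<Rightarrow> nat"
  assumes G: "connected_graph V E" and twinned: "\<forall>v\<in>V. \<exists>y\<in>V - {v}. twins V E v y"
    and \<pi>: "\<And>x y. x \<in> V \<Longrightarrow> y \<in> V \<Longrightarrow> \<pi> x = \<pi> y \<longleftrightarrow> twins V E x y"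
  shows "in_blowup_family V E"
proof -
  have S: "simple_graph V E" by (rule connected_graph_simple[OF G])
  define F where "F a b \<longleftrightarrow> a \<noteq> b \<and> (\<exists>x\<in>V. \<exists>y\<in>V. \<pi> x = a \<and> \<pi> y = b \<and> E x y)" for a b
  have cross: "E x y \<longleftrightarrow> F (\<pi> x) (\<pi> y)" if xy: "x \<in> V" "y \<in> V" "\<pi> x \<noteq> \<pi> y" for x y
  proof
    assume "F (\<pi> x) (\<pi> y)"
    then obtain x' y' where x'y': "x' \<in> V" "y' \<in> V" "\<pi> x' = \<pi> x" "\<pi> y' = \<pi> y" "E x' y'"
      unfolding F_def by blast
    then have "twins V E x' x" "twins V E y' y" using \<pi> xy by simp_all
    moreover have "{x', x} \<inter> {y', y} = {}" using xy(3) x'y'(3,4) by auto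
    ultimately show "E x y" using adj_twins_cong[OF S] x'y' xy by blast
  qed (unfold F_def, use xy in blast)
  have "simple_graph (\<pi> ` V) F"
    unfolding simple_graph_def
  proof (intro conjI allI impI)
    show "finite (\<pi> ` V)" using simple_graphD(1)[OF S] by simp
    fix a b assume "F a b"
    then show "a \<in> \<pi> ` V" "b \<in> \<pi> ` V" "F b a" unfolding F_def using simple_graphD(4)[OF S] by auto
  next
    fix a show "\<not> F a a" unfolding F_def by simp
  qed
  then have connected: "connected_graph (\<pi> ` V) F"
    by (rule connected_graph_image[OF G]) (use cross simple_graphD(2,3)[OF S] in blast)
  have fibres: "card {x \<in> V. \<pi> x = \<pi> v} \<ge> 2
      \<and> ((\<forall>x\<in>V. \<forall>y\<in>V. \<pi> x = \<pi> v \<and> \<pi> y = \<pi> v \<and> x \<noteq> y \<longrightarrow> E x y)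
         \<or> (\<forall>x\<in>V. \<forall>y\<in>V. \<pi> x = \<pi> v \<and> \<pi> y = \<pi> v \<longrightarrow> \<not> E x y))" if v: "v \<in> V" for v
  proof -
    have "\<pi> x = \<pi> v \<longleftrightarrow> twins V E v x" if "x \<in> V" for x
      using \<pi>[OF that v] twins_sym by metis
    then have fibre: "{x \<in> V. \<pi> x = \<pi> v} = twin_class V E v" by (auto simp: twin_class_def)
    obtain y where "y \<in> V - {v}" "twins V E v y" using twinned v by blast
    then have "2 \<le> card (twin_class V E v)"
      by (rule two_le_card_twin_class[OF simple_graphD(1)[OF S] v])
    with twin_class_complete_or_edgeless[OF S v] show ?thesis
      unfolding fibre[symmetric] by auto
  qed
  show ?thesis
    unfolding in_blowup_family_def
    using fibres cross
    by (intro exI[of _ "\<pi> ` V"] exI[of _ F] exI[of _ \<pi>] conjI ballI impI connected refl) auto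
qed

lemma in_blowup_family_iff_twinned:
  assumes G: "connected_graph V E"
  shows "in_blowup_family V E \<longleftrightarrow> (\<forall>v\<in>V. \<exists>y\<in>V - {v}. twins V E v y)"
proof
  assume twinned: "\<forall>v\<in>V. \<exists>y\<in>V - {v}. twins V E v y"
  have S: "simple_graph V E" by (rule connected_graph_simple[OF G])
  then have "finite (twin_class V E ` V)" using simple_graphD(1) by blast
  \<comment> \<open>the vertices of \<open>H\<close> must be naturals, so the twin classes are encoded injectively\<close>
  then obtain enc :: "'a set \<Rightarrow> nat" where enc: "inj_on enc (twin_class V E ` V)"
    using finite_imp_inj_to_nat_seg by blast
  have "(enc \<circ> twin_class V E) x = (enc \<circ> twin_class V E) y \<longleftrightarrow> twins V E x y"
    if "x \<in> V" "y \<in> V" for x y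
  proof -
    have "enc (twin_class V E x) = enc (twin_class V E y) \<longleftrightarrow> twin_class V E x = twin_class V E y"
      using inj_on_eq_iff[OF enc] that by blast
    then show ?thesis using twin_class_eq_iff[OF S that] by simp
  qed
  then show "in_blowup_family V E" by (rule in_blowup_familyI[OF G twinned])
next
  assume "in_blowup_family V E"
  then show "\<forall>v\<in>V. \<exists>y\<in>V - {v}. twins V E v y" by (intro ballI twinned_if_in_blowup_family)
qed

theorem theorem2p8:
  fixes V :: "'a set" and E :: "'a \<Rightarrow> 'a \<Rightarrow> bool"
  assumes "connected_graph V E" and "card V \<ge> 2"
  shows "frac_trunc_dim 1 V E = real (card V) / 2 \<longleftrightarrow> in_blowup_family V E"
  using frac_trunc_dim_1_eq_half_card_iff[OF assms(1)] in_blowup_family_iff_twinned[OF assms(1)]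
  by simp

end
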